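(* Let $n\ge1$ and $1\le k\le n$. Let $\equiv$ be the equivalence relation on $\mathfrak S_n$ generated by the relations $cab\equiv cba$ and $abc\equiv acb$ for letters $a<b<c$ in three consecutive positions. Among the $\equiv$-classes of $\mathfrak S_n$, exactly $\binom{n-1}{k-1}$ are classes of permutations beginning with the letter $k$.
   Context: Permutations of $\mathfrak S_n$ are words $\sigma_1\cdots\sigma_n$; a relation such as $cab\equiv cba$ allows replacing three adjacent letters forming the pattern $cab$ by the same letters arranged as $cba$, and conversely. *)

theory Defs
  imports Main
begin

definition perms :: "nat \<Rightarrow> nat list set" where
  "perms n = {w. distinct w \<and> set w = {1..n}}"

definition elem_move :: "(nat list \<times> nat list) set" where
  "elem_move = {(u, v). \<exists>x y a b c. a < b \<and> b < c \<and>
      ((u = x @ [c, a, b] @ y \<and> v = x @ [c, b, a] @ y) \<or>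
       (u = x @ [a, b, c] @ y \<and> v = x @ [a, c, b] @ y))}"

definition cong_rel :: "nat \<Rightarrow> (nat list \<times> nat list) set" where
  "cong_rel n = Restr ((elem_move \<union> elem_move\<inverse>)\<^sup>*) (perms n)"

end

theory Submission
  imports Defs "HOL-Library.Multiset"
begin

text \<open>
  Call a word prefix-convex if the letters of each of its prefixes form an interval of its set of
  letters.  After a letter x, any block of letters larger than x can be rearranged at will, and
  dually for smaller letters via the order reversal z \<mapsto> N - z, which maps moves to moves.  This is
  enough to put a new first letter in front of a prefix-convex word and restore prefix-convexity,
  so every class contains a prefix-convex permutation.  A prefix-convex permutation starting with
  k is k followed by a shuffle of k-1, ..., 1 with k+1, ..., n.  Distinct shuffles lie in distinct
  classes: whether the first letter outside an open interval (lo, hi) lies below it is invariant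
  under the moves.  So the classes starting with k correspond to the (n-1 choose k-1) shuffles.
\<close>

abbreviation equiv_words :: "nat list \<Rightarrow> nat list \<Rightarrow> bool" (infix "\<approx>" 50) where
  "u \<approx> v \<equiv> (u, v) \<in> (elem_move \<union> elem_move\<inverse>)\<^sup>*"

lemma equiv_words_sym: "u \<approx> v \<Longrightarrow> v \<approx> u"
  by (metis converse_Un converse_converse rtrancl_converseI sup_commute)

lemma elem_move_context: "(u, v) \<in> elem_move \<Longrightarrow> (p @ u @ s, p @ v @ s) \<in> elem_move"
  unfolding elem_move_def
proof clarify
  fix x y :: "nat list" and a b c :: nat
  assume "a < b" "b < c"
    "u = x @ [c, a, b] @ y \<and> v = x @ [c, b, a] @ y \<or> u = x @ [a, b, c] @ y \<and> v = x @ [a, c, b] @ y"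
  then show "\<exists>x' y' a b c. a < b \<and> b < c \<and>
      (p @ u @ s = x' @ [c, a, b] @ y' \<and> p @ v @ s = x' @ [c, b, a] @ y' \<or>
       p @ u @ s = x' @ [a, b, c] @ y' \<and> p @ v @ s = x' @ [a, c, b] @ y')"
    by (intro exI[of _ "p @ x"] exI[of _ "y @ s"]) auto
qed

lemma equiv_words_context: "u \<approx> v \<Longrightarrow> p @ u @ s \<approx> p @ v @ s"
proof (induction rule: rtrancl_induct)
  case (step v w)
  then have "(p @ v @ s, p @ w @ s) \<in> elem_move \<union> elem_move\<inverse>"
    using elem_move_context by blast
  with step.IH show ?case by (rule rtrancl_into_rtrancl)
qed simp

lemma equiv_words_invariant:
  assumes "\<And>u v. (u, v) \<in> elem_move \<Longrightarrow> f u = f v" and "u \<approx> v"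
  shows "f u = f v"
  using assms(2) by induction (auto dest: assms(1))

lemma elem_move_mset: "(u, v) \<in> elem_move \<Longrightarrow> mset u = mset v"
  unfolding elem_move_def by (auto simp: add_mset_commute)

lemma elem_move_hd: "(u, v) \<in> elem_move \<Longrightarrow> hd u = hd v"
  unfolding elem_move_def by (auto simp: hd_append)

lemma equiv_words_mset: "u \<approx> v \<Longrightarrow> mset u = mset v"
  by (rule equiv_words_invariant[OF elem_move_mset])

lemma equiv_words_hd: "u \<approx> v \<Longrightarrow> hd u = hd v"
  by (rule equiv_words_invariant[OF elem_move_hd])

lemma swap_after_smaller:
  assumes "x < y" "x < z" "y \<noteq> z"
  shows "x # y # z # t \<approx> x # z # y # t"
proof -
  have move: "([] @ [a, b, c] @ t, [] @ [a, c, b] @ t) \<in> elem_move" if "a < b" "b < c" for a b c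
    unfolding elem_move_def using that by blast
  have "(x # y # z # t, x # z # y # t) \<in> elem_move \<union> elem_move\<inverse>"
    using assms move[of x y z] move[of x z y] by (cases "y < z") auto
  then show ?thesis by blast
qed

lemma elem_move_reflect:
  assumes "(u, v) \<in> elem_move" "set u \<subseteq> {..N}"
  shows "(map ((-) N) v, map ((-) N) u) \<in> elem_move"
proof -
  obtain x y a b c where abc: "a < b" "b < c" and uv:
    "u = x @ [c, a, b] @ y \<and> v = x @ [c, b, a] @ y \<or> u = x @ [a, b, c] @ y \<and> v = x @ [a, c, b] @ y"
    using assms(1) unfolding elem_move_def by blast
  have "N - c < N - b" "N - b < N - a" using abc uv assms(2) by auto
  with uv show ?thesis
    unfolding elem_move_def
    by (intro CollectI case_prodI exI[of _ "map ((-) N) x"] exI[of _ "map ((-) N) y"]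
        exI[of _ "N - c"] exI[of _ "N - b"] exI[of _ "N - a"]) auto
qed

lemma equiv_words_reflect: "u \<approx> v \<Longrightarrow> set u \<subseteq> {..N} \<Longrightarrow> map ((-) N) u \<approx> map ((-) N) v"
proof (induction rule: rtrancl_induct)
  case (step v w)
  have "set v \<subseteq> {..N}" using step.prems equiv_words_mset[OF step.hyps(1)] by (metis mset_eq_setD)
  then have "(map ((-) N) v, map ((-) N) w) \<in> elem_move \<union> elem_move\<inverse>"
    using step.hyps(2) elem_move_reflect[of v w N] elem_move_reflect[of w v N]
    by (auto dest: elem_move_mset mset_eq_setD)
  with step.IH[OF step.prems] show ?case by (rule rtrancl_into_rtrancl)
qed simp

lemma reflect_reflect: "set w \<subseteq> {..N::nat} \<Longrightarrow> map ((-) N) (map ((-) N) w) = w"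
  by (induction w) auto

lemma equiv_words_reflect_iff:
  assumes "set u \<subseteq> {..N}" "set v \<subseteq> {..N}"
  shows "map ((-) N) u \<approx> map ((-) N) v \<longleftrightarrow> u \<approx> v"
proof
  assume "map ((-) N) u \<approx> map ((-) N) v"
  then have "map ((-) N) (map ((-) N) u) \<approx> map ((-) N) (map ((-) N) v)"
    by (rule equiv_words_reflect) auto
  then show "u \<approx> v" by (simp only: reflect_reflect assms)
next
  assume "u \<approx> v"
  then show "map ((-) N) u \<approx> map ((-) N) v" using assms(1) by (rule equiv_words_reflect)
qed

lemma rearrange_after_larger_if_after_smaller:
  assumes above: "\<And>x B B'. length B < m \<Longrightarrow> distinct B \<Longrightarrow> \<forall>b\<in>set B. x < b \<Longrightarrow>
      mset B' = mset B \<Longrightarrow> x # B \<approx> x # B'"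
    and "length B < m" "distinct B" "\<forall>b\<in>set B. b < x" "mset B' = mset B"
  shows "x # B \<approx> x # B'"
proof -
  have "inj_on ((-) x) (set B)" using assms(4) by (auto simp: inj_on_def)
  then have "map ((-) x) (x # B) \<approx> map ((-) x) (x # B')"
    using assms(2-5) by (auto simp: distinct_map intro!: above)
  moreover have "set B' = set B" using assms(5) by (rule mset_eq_setD)
  then have "set (x # B) \<subseteq> {..x}" "set (x # B') \<subseteq> {..x}" using assms(4) by auto
  ultimately show ?thesis by (simp only: equiv_words_reflect_iff)
qed

text \<open>The maximum u of U, once next to x, exceeds every letter up to r, so r can be brought
  behind u and then swapped past it.\<close>
lemma equiv_words_lower_head:
  assumes above: "\<And>x C C'. length C < length (y # U @ r # R) \<Longrightarrow> distinct C \<Longrightarrow>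
      \<forall>c\<in>set C. x < c \<Longrightarrow> mset C' = mset C \<Longrightarrow> x # C \<approx> x # C'"
    and dist: "distinct (y # U @ r # R)" and gt: "\<forall>b\<in>set (y # U @ r # R). x < b"
    and U: "\<forall>u\<in>set U. y < u" and "r < y"
  shows "\<exists>B. mset B = mset (y # U @ r # R) \<and> hd B < y \<and> x # y # U @ r # R \<approx> x # B"
proof (cases "U = []")
  case True
  then show ?thesis
    using swap_after_smaller[of x y r R] assms by (intro exI[of _ "r # y # R"]) auto
next
  case False
  define u where "u = Max (set U)"
  define W where "W = remove1 u U"
  have "u \<in> set U" using False unfolding u_def by simp
  then have mset_U: "mset U = mset (u # W)" unfolding W_def by simp
  have "distinct U" using dist by simp
  then have "set W = set U - {u}" unfolding W_def by simp
  then have W: "\<forall>w\<in>set W. w < u" using Max_ge[of "set U"] by (auto simp: u_def less_le)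
  have "y < u" "x < u" using \<open>u \<in> set U\<close> U gt by auto
  note below = rearrange_after_larger_if_after_smaller[OF above]
  have "y # U \<approx> y # u # W" using mset_U dist U by (intro above) auto
  from equiv_words_context[OF this, of "[x]" "r # R"]
  have "x # y # U @ r # R \<approx> x # y # u # W @ r # R" by simp
  also have "x # y # u # W @ r # R \<approx> x # u # y # W @ r # R"
    using \<open>y < u\<close> \<open>x < u\<close> gt by (simp add: swap_after_smaller)
  also have "x # u # y # W @ r # R \<approx> x # u # r # y # W @ R"
  proof -
    have "u # y # W @ [r] \<approx> u # r # y # W"
      using mset_U dist W \<open>y < u\<close> \<open>r < y\<close> \<open>u \<in> set U\<close> \<open>U \<noteq> []\<close>
      by (intro below) (auto simp: W_def length_remove1 length_pos_if_in_set)
    from equiv_words_context[OF this, of "[x]" R] show ?thesis by simp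
  qed
  also have "x # u # r # y # W @ R \<approx> x # r # u # y # W @ R"
    using \<open>r < y\<close> \<open>y < u\<close> \<open>x < u\<close> gt by (simp add: swap_after_smaller)
  finally show ?thesis
    using mset_U \<open>r < y\<close> by (intro exI[of _ "r # u # y # W @ R"]) auto
qed

lemma sort_after_smaller:
  assumes above: "\<And>x C C'. length C < m \<Longrightarrow> distinct C \<Longrightarrow> \<forall>c\<in>set C. x < c \<Longrightarrow>
      mset C' = mset C \<Longrightarrow> x # C \<approx> x # C'"
    and "length B = m" "distinct B" "\<forall>b\<in>set B. x < b"
  shows "x # B \<approx> x # sort B"
  using assms(2-4)
proof (induction "hd B" arbitrary: B rule: less_induct)
  case less
  show ?case
  proof (cases B)
    case (Cons y s)
    show ?thesis
    proof (cases "\<forall>z\<in>set s. y < z")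
      case True
      have "y # s \<approx> y # sort s" using less.prems Cons True by (intro above) auto
      moreover have "sort B = y # sort s" using Cons True by (simp add: insort_is_Cons less_imp_le)
      ultimately show ?thesis using equiv_words_context[of _ _ "[x]" "[]"] Cons by simp
    next
      case False
      then have "\<exists>z\<in>set s. z < y" using less.prems(2) Cons by (auto simp: not_less le_less)
      then obtain U r R where s: "s = U @ r # R" "r < y" "\<forall>u\<in>set U. \<not> u < y"
        using split_list_first_prop[of s "\<lambda>z. z < y"] by blast
      have B: "B = y # U @ r # R" using Cons s by simp
      have "\<forall>u\<in>set U. y < u" using less.prems(2) s B by (auto simp: not_less le_less)
      moreover have len: "length (y # U @ r # R) = m" using less.prems(1) B by simp
      ultimately have "\<exists>B2. mset B2 = mset B \<and> hd B2 < y \<and> x # B \<approx> x # B2"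
        unfolding B using less.prems(2,3) \<open>r < y\<close>
        by (intro equiv_words_lower_head[OF above[folded len]]) (auto simp: B)
      then obtain B2 where B2: "mset B2 = mset B" "hd B2 < y" "x # B \<approx> x # B2" by blast
      have "length B2 = m" "distinct B2" "\<forall>c\<in>set B2. x < c"
        using less.prems mset_eq_length[OF B2(1)] mset_eq_imp_distinct_iff[OF B2(1)]
          mset_eq_setD[OF B2(1)] by auto
      then have "x # B2 \<approx> x # sort B2" using less.hyps[of B2] B2(2) B by simp
      moreover have "sort B2 = sort B" using B2(1) by (metis sorted_list_of_multiset_mset)
      ultimately show ?thesis using B2(3) by (metis rtrancl_trans)
    qed
  qed simp
qed

lemma rearrange_after_smaller:
  assumes "distinct B" "\<forall>b\<in>set B. x < b" "mset B' = mset B"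
  shows "x # B \<approx> x # B'"
  using assms
proof (induction "length B" arbitrary: x B B' rule: less_induct)
  case less
  have above: "x # C \<approx> x # C'"
    if "length C < length B" "distinct C" "\<forall>c\<in>set C. x < c" "mset C' = mset C" for x C C'
    using less.hyps that by blast
  have sorted: "x # C \<approx> x # sort C" if "length C = length B" "distinct C" "\<forall>c\<in>set C. x < c" for C
    using above that by (rule sort_after_smaller)
  have "length B' = length B" "distinct B'" "\<forall>c\<in>set B'. x < c"
    using less.prems mset_eq_length[OF less.prems(3)] mset_eq_imp_distinct_iff[OF less.prems(3)]
      mset_eq_setD[OF less.prems(3)] by auto
  then have "x # B' \<approx> x # sort B'" by (rule sorted)
  moreover have "x # B \<approx> x # sort B" by (rule sorted[OF refl less.prems(1,2)])
  moreover have "sort B' = sort B" using less.prems(3) by (metis sorted_list_of_multiset_mset)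
  ultimately show ?case by (metis equiv_words_sym rtrancl_trans)
qed

definition convex_in :: "'a::linorder set \<Rightarrow> 'a set \<Rightarrow> bool" where
  "convex_in S T \<longleftrightarrow> (\<forall>a\<in>T. \<forall>c\<in>T. \<forall>b\<in>S. a < b \<longrightarrow> b < c \<longrightarrow> b \<in> T)"

definition prefix_convex :: "'a::linorder list \<Rightarrow> bool" where
  "prefix_convex w \<longleftrightarrow> (\<forall>i. convex_in (set w) (set (take i w)))"

lemma convex_inD:
  "convex_in S T \<Longrightarrow> a \<in> T \<Longrightarrow> c \<in> T \<Longrightarrow> b \<in> S \<Longrightarrow> a < b \<Longrightarrow> b < c \<Longrightarrow> b \<in> T"
  unfolding convex_in_def by blast

lemma convex_in_insert:
  assumes "convex_in S P" "a \<in> P" "c \<in> P" "a < x" "x < c"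
  shows "convex_in (insert x S) (insert x P)"
  using assms unfolding convex_in_def by (metis insert_iff order.strict_trans)

lemma convex_in_reflect:
  assumes "convex_in S T" "T \<subseteq> S" "S \<subseteq> {..N::nat}"
  shows "convex_in ((-) N ` S) ((-) N ` T)"
  unfolding convex_in_def
proof clarify
  fix a c b assume "a \<in> T" "c \<in> T" "b \<in> S" "N - a < N - b" "N - b < N - c"
  moreover from this have "c < b" "b < a" using assms(2,3) by auto
  ultimately show "N - b \<in> (-) N ` T" using assms(1) unfolding convex_in_def by blast
qed

lemma prefix_convex_reflect:
  fixes w :: "nat list"
  assumes "prefix_convex w" "set w \<subseteq> {..N}"
  shows "prefix_convex (map ((-) N) w)"
  unfolding prefix_convex_def
proof
  fix i
  have "convex_in ((-) N ` set w) ((-) N ` set (take i w))"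
    using assms set_take_subset[of i w] unfolding prefix_convex_def by (intro convex_in_reflect) auto
  then show "convex_in (set (map ((-) N) w)) (set (take i (map ((-) N) w)))" by (simp add: take_map)
qed

lemma sorted_take_downward_closed:
  assumes "sorted L" "c \<in> set (take j L)" "b \<in> set L" "b < c"
  shows "b \<in> set (take j L)"
  using assms sorted_append[of "take j L" "drop j L"]
  by (metis Un_iff append_take_drop_id leD set_append)

lemma convex_in_insert_take_sort:
  assumes block: "\<And>b c. b \<in> S \<Longrightarrow> x < b \<Longrightarrow> b < c \<Longrightarrow> c \<in> set A \<Longrightarrow> b \<in> set A"
    and A: "\<forall>a\<in>set A. x < a"
  shows "convex_in (insert x S) (insert x (set (take j (sort A))))"
  unfolding convex_in_def
proof (intro ballI impI)
  fix a c b
  assume a: "a \<in> insert x (set (take j (sort A)))" and c: "c \<in> insert x (set (take j (sort A)))"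
    and b: "b \<in> insert x S" "a < b" "b < c"
  have "x \<le> a" using a A by (auto dest: in_set_takeD simp: less_imp_le)
  with b have "x < b" by simp
  with b c have "b \<in> S" and c_prefix: "c \<in> set (take j (sort A))" by auto
  moreover from c_prefix have "c \<in> set A" by (auto dest: in_set_takeD)
  ultimately have "b \<in> set A" using block \<open>x < b\<close> b(3) by blast
  then show "b \<in> insert x (set (take j (sort A)))"
    using sorted_take_downward_closed[OF sorted_sort c_prefix] b(3) by simp
qed

lemma prefix_convex_Cons_sort:
  assumes pc: "prefix_convex (A @ D)" and A: "A \<noteq> []" "\<forall>a\<in>set A. x < a"
    and D: "D \<noteq> [] \<Longrightarrow> hd D < x"
  shows "prefix_convex (x # sort A @ D)"
proof -
  define S where "S = set (A @ D)"
  have prefix: "convex_in S (set (take i (A @ D)))" for i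
    using pc unfolding prefix_convex_def S_def by blast
  have block: "b \<in> set A" if "b \<in> S" "x < b" "b < c" "c \<in> set A" for b c
  proof (cases D)
    case (Cons d D')
    have "convex_in S (insert d (set A))" using prefix[of "Suc (length A)"] Cons by simp
    moreover have "d < x" using D Cons by simp
    ultimately show ?thesis using convex_inD[of S "insert d (set A)" d c b] that less_trans[of d x b] by auto
  qed (use that in \<open>simp add: S_def\<close>)
  have long: "convex_in (insert x S) (insert x (set (take (length A + k) (A @ D))))" if "0 < k" for k
  proof (cases D)
    case (Cons d D')
    show ?thesis
    proof (rule convex_in_insert[OF prefix])
      show "d \<in> set (take (length A + k) (A @ D))" "hd A \<in> set (take (length A + k) (A @ D))"
        using Cons \<open>0 < k\<close> A(1) by (auto simp: take_Suc_conv_app_nth gr0_conv_Suc)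
      show "d < x" "x < hd A" using D Cons A by auto
    qed
  qed (simp add: S_def convex_in_def)
  show ?thesis
    unfolding prefix_convex_def
  proof
    fix i
    have "convex_in (insert x S) (set (take i (x # sort A @ D)))"
    proof (cases "i \<le> Suc (length A)")
      case True
      have "convex_in (insert x S) (insert x (set (take (i - 1) (sort A))))"
        using block A(2) by (rule convex_in_insert_take_sort)
      with True show ?thesis by (cases i) (simp_all add: convex_in_def)
    next
      case False
      define k where "k = i - Suc (length A)"
      then have "i = Suc (length A + k)" "0 < k" using False by auto
      then show ?thesis using long[of k] by simp
    qed
    then show "convex_in (set (x # sort A @ D)) (set (take i (x # sort A @ D)))" by (simp add: S_def)
  qed
qed

lemma exists_prefix_convex_Cons_less:
  assumes "prefix_convex c" "distinct (x # c)" "c \<noteq> []" "x < hd c"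
  shows "\<exists>c'. x # c \<approx> c' \<and> prefix_convex c'"
proof -
  define A where "A = takeWhile ((<) x) c"
  define D where "D = dropWhile ((<) x) c"
  have c: "c = A @ D" by (simp add: A_def D_def)
  have "A \<noteq> []" using assms(3,4) by (cases c) (auto simp: A_def)
  have A: "\<forall>a\<in>set A. x < a" by (auto simp: A_def dest: set_takeWhileD)
  have "hd D < x" if "D \<noteq> []"
  proof -
    have "\<not> x < hd D" using that hd_dropWhile unfolding D_def by metis
    moreover have "hd D \<noteq> x" using assms(2) that c hd_in_set[OF that] by auto
    ultimately show ?thesis by simp
  qed
  then have "prefix_convex (x # sort A @ D)"
    using assms(1) c \<open>A \<noteq> []\<close> A by (intro prefix_convex_Cons_sort) simp_all
  moreover have "x # c \<approx> x # sort A @ D"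
    using equiv_words_context[OF rearrange_after_smaller[of A x "sort A"], of "[]" D] assms(2) c A by simp
  ultimately show ?thesis by blast
qed

lemma exists_prefix_convex_Cons:
  assumes "prefix_convex c" "distinct (x # c)"
  shows "\<exists>c'. x # c \<approx> c' \<and> prefix_convex c'"
proof (cases "c = []")
  case True
  have "prefix_convex [x]" unfolding prefix_convex_def convex_in_def by (auto simp: take_Cons')
  then show ?thesis using True by blast
next
  case False
  show ?thesis
  proof (cases "x < hd c")
    case True
    then show ?thesis using exists_prefix_convex_Cons_less assms False by blast
  next
    case False
    then have "hd c < x" using assms(2) hd_in_set[OF \<open>c \<noteq> []\<close>] by (auto simp: not_less le_less)
    define N where "N = Max (set (x # c))"
    have bound: "set (x # c) \<subseteq> {..N}" by (auto simp: N_def)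
    then have "prefix_convex (map ((-) N) c)" using assms(1) by (intro prefix_convex_reflect) auto
    moreover have "inj_on ((-) N) {..N}" by (auto simp: inj_on_def)
    then have "distinct (map ((-) N) (x # c))"
      using assms(2) bound by (simp only: distinct_map inj_on_subset)
    moreover have "N - x < hd (map ((-) N) c)"
      using \<open>hd c < x\<close> \<open>c \<noteq> []\<close> bound by (auto simp: hd_map)
    ultimately obtain c' where c': "map ((-) N) (x # c) \<approx> c'" "prefix_convex c'"
      using exists_prefix_convex_Cons_less[of "map ((-) N) c" "N - x"] \<open>c \<noteq> []\<close> by auto
    have "set c' \<subseteq> {..N}"
      using mset_eq_setD[OF equiv_words_mset[OF c'(1)], symmetric] by auto
    then have "map ((-) N) (x # c) \<approx> map ((-) N) (map ((-) N) c')" using c'(1) by (simp only: reflect_reflect)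
    then have "x # c \<approx> map ((-) N) c'" using bound by (subst (asm) equiv_words_reflect_iff) auto
    moreover have "prefix_convex (map ((-) N) c')" using c'(2) \<open>set c' \<subseteq> {..N}\<close> by (rule prefix_convex_reflect)
    ultimately show ?thesis by blast
  qed
qed

lemma exists_prefix_convex: "distinct w \<Longrightarrow> \<exists>c. w \<approx> c \<and> prefix_convex c"
proof (induction w)
  case Nil
  have "prefix_convex []" by (simp add: prefix_convex_def convex_in_def)
  then show ?case by blast
next
  case (Cons x r)
  then obtain c where c: "r \<approx> c" "prefix_convex c" by auto
  have "x # r \<approx> x # c" using equiv_words_context[OF c(1), of "[x]" "[]"] by simp
  moreover from this have "distinct (x # c)"
    using Cons.prems by (metis equiv_words_mset mset_eq_imp_distinct_iff)
  then obtain c' where "x # c \<approx> c'" "prefix_convex c'" using exists_prefix_convex_Cons c(2) by blast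
  ultimately show ?case by (meson rtrancl_trans)
qed

lemma convex_in_insert_interval:
  assumes conv: "convex_in {lo..hi} (insert z {a..b})" and "z \<in> {lo..hi}" "z \<notin> {a..b}"
    and "a \<le> b" "{a..b} \<subseteq> {lo..hi::nat}"
  shows "z = a - 1 \<or> z = Suc b"
proof (rule ccontr)
  assume "\<not> (z = a - 1 \<or> z = Suc b)"
  with assms(3) consider "z < a - 1" | "Suc b < z" by force
  then show False
  proof cases
    case 1
    with assms(2,4,5) have "a - 1 \<in> {lo..hi}" by auto
    then show False using convex_inD[OF conv, of z a "a - 1"] 1 assms(4) by auto
  next
    case 2
    with assms(2,4,5) have "Suc b \<in> {lo..hi}" by auto
    then show False using convex_inD[OF conv, of b z "Suc b"] 2 assms(4) by auto
  qed
qed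

lemma prefix_convex_shuffles:
  assumes "prefix_convex (p @ r)" "distinct (p @ r)" "set (p @ r) = {lo..hi}" "set p = {a..b}" "a \<le> b"
  shows "r \<in> shuffles (rev [lo..<a]) [Suc b..<Suc hi]"
  using assms
proof (induction r arbitrary: p a b)
  case Nil
  then have "lo = a" "hi = b" by auto
  then show ?case by simp
next
  case (Cons z r)
  have "set (take (Suc (length p)) (p @ z # r)) = insert z {a..b}" using Cons.prems(4) by simp
  then have "convex_in {lo..hi} (insert z {a..b})"
    using Cons.prems(1,3) unfolding prefix_convex_def by metis
  moreover have z: "z \<notin> {a..b}" "z \<in> {lo..hi}" using Cons.prems(2-4) by auto
  moreover have "{a..b} \<subseteq> {lo..hi}" using Cons.prems(3,4) by auto
  ultimately have "z = a - 1 \<or> z = Suc b" using Cons.prems(5) convex_in_insert_interval by blast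
  have prems: "prefix_convex ((p @ [z]) @ r)" "distinct ((p @ [z]) @ r)" "set ((p @ [z]) @ r) = {lo..hi}"
    using Cons.prems by auto
  consider "a = Suc z" | "z = Suc b" using \<open>z = a - 1 \<or> z = Suc b\<close> z(1) Cons.prems(5) by force
  then show ?case
  proof cases
    case 1
    then have "set (p @ [z]) = {z..b}" "rev [lo..<a] = z # rev [lo..<z]"
      using Cons.prems(4,5) z(2) by auto
    then show ?thesis using Cons.IH[OF prems] 1 Cons.prems(5) by (simp add: Cons_in_shuffles_leftI)
  next
    case 2
    then have "set (p @ [z]) = {a..z}" "[Suc b..<Suc hi] = z # [Suc z..<Suc hi]"
      using Cons.prems(4,5) z(2) by (auto simp: upt_conv_Cons)
    then show ?thesis using Cons.IH[OF prems] 2 Cons.prems(5) by (simp add: Cons_in_shuffles_rightI)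
  qed
qed

definition first_outside_below :: "nat list \<Rightarrow> nat \<Rightarrow> nat \<Rightarrow> bool" where
  "first_outside_below w lo hi \<longleftrightarrow> hd (filter (\<lambda>z. z \<le> lo \<or> hi \<le> z) w) \<le> lo"

text \<open>A move keeps the first letter of its triple; when that letter lies strictly inside (lo, hi),
  the two letters the move exchanges cannot lie on opposite sides of the interval.\<close>
lemma elem_move_first_outside_below:
  assumes "(u, v) \<in> elem_move"
  shows "first_outside_below u = first_outside_below v"
proof (intro ext)
  fix lo hi
  obtain x y a b c where "a < b" "b < c" and
    "u = x @ [c, a, b] @ y \<and> v = x @ [c, b, a] @ y \<or> u = x @ [a, b, c] @ y \<and> v = x @ [a, c, b] @ y"
    using assms unfolding elem_move_def by blast
  then show "first_outside_below u lo hi = first_outside_below v lo hi"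
    unfolding first_outside_below_def
    by (cases "filter (\<lambda>z. z \<le> lo \<or> hi \<le> z) x = []") (auto split: if_splits)
qed

lemma first_outside_below_append_inside:
  "\<forall>z\<in>set p. lo < z \<and> z < hi \<Longrightarrow> first_outside_below (p @ w) lo hi = first_outside_below w lo hi"
  unfolding first_outside_below_def by (simp add: filter_empty_conv not_le)

lemma first_outside_below_differ:
  assumes "\<forall>z\<in>set p. x < z \<and> z < y" "x < y"
  shows "first_outside_below (p @ x # u) \<noteq> first_outside_below (p @ y # v)"
proof -
  have "first_outside_below (p @ x # u) x y \<noteq> first_outside_below (p @ y # v) x y"
    using assms by (simp add: first_outside_below_append_inside) (simp add: first_outside_below_def)
  then show ?thesis by metis
qed

lemma shuffles_eq_if_first_outside_below_eq:
  assumes "r \<in> shuffles xs ys" "r' \<in> shuffles xs ys"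
    and "sorted_wrt (>) xs" "sorted_wrt (<) ys" "\<forall>a\<in>set xs. \<forall>c\<in>set ys. a < c"
    and "\<forall>z\<in>set p. (\<forall>a\<in>set xs. a < z) \<and> (\<forall>c\<in>set ys. z < c)"
    and "first_outside_below (p @ r) = first_outside_below (p @ r')"
  shows "r = r'"
  using assms
proof (induction r arbitrary: r' xs ys p)
  case Nil
  then show ?case by simp
next
  case (Cons z r)
  obtain z' s' where r': "r' = z' # s'"
    using Cons.prems(1,2) by (cases r') (auto dest: length_shuffles)
  have tail: "r = s'"
    if "r \<in> shuffles xs' ys'" "s' \<in> shuffles xs' ys'" "sorted_wrt (>) xs'" "sorted_wrt (<) ys'"
      "\<forall>a\<in>set xs'. \<forall>c\<in>set ys'. a < c"
      "\<forall>w\<in>set (p @ [z]). (\<forall>a\<in>set xs'. a < w) \<and> (\<forall>c\<in>set ys'. w < c)"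
      "z = z'" for xs' ys'
    using Cons.IH[OF that(1-6)] Cons.prems(7) that(7) r' by simp
  have "z = z'"
  proof (rule ccontr)
    assume "z \<noteq> z'"
    with Cons.prems(1,2) have heads: "xs \<noteq> [] \<and> ys \<noteq> [] \<and> {z, z'} = {hd xs, hd ys}"
      unfolding r' by (auto simp: Cons_in_shuffles_iff)
    then have "\<forall>w\<in>set p. hd xs < w \<and> w < hd ys" "hd xs < hd ys" using Cons.prems(5,6) by auto
    with heads show False
      using first_outside_below_differ[of p "hd xs" "hd ys"] Cons.prems(7) r'
      by (auto simp: doubleton_eq_iff) metis
  qed
  from Cons.prems(1,2,5) consider
      (left) xs' where "xs = z # xs'" "r \<in> shuffles xs' ys" "s' \<in> shuffles xs' ys"
    | (right) ys' where "ys = z # ys'" "r \<in> shuffles xs ys'" "s' \<in> shuffles xs ys'"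
    unfolding r' \<open>z = z'\<close>[symmetric] by (auto simp: Cons_in_shuffles_iff neq_Nil_conv)
  then show ?case
  proof cases
    case (left xs')
    then show ?thesis using tail[of xs' ys] Cons.prems(3-6) \<open>z = z'\<close> r' by auto
  next
    case (right ys')
    then show ?thesis using tail[of xs ys'] Cons.prems(3-6) \<open>z = z'\<close> r' by auto
  qed
qed

lemma perms_equiv_words: "w \<in> perms n \<Longrightarrow> w \<approx> v \<Longrightarrow> v \<in> perms n"
  unfolding perms_def by (metis equiv_words_mset mem_Collect_eq mset_eq_imp_distinct_iff mset_eq_setD)

lemma equiv_cong_rel: "equiv (perms n) (cong_rel n)"
  unfolding equiv_def refl_on_def sym_def trans_def cong_rel_def
  by (auto intro: equiv_words_sym rtrancl_trans)

lemma Cons_shuffles_in_perms: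
  assumes "r \<in> shuffles (rev [1..<k]) [Suc k..<Suc n]" "1 \<le> k" "k \<le> n"
  shows "k # r \<in> perms n"
proof -
  have "distinct r"
    using distinct_disjoint_shuffles[OF _ _ _ assms(1)] by (simp del: upt_Suc)
  moreover have "set r = {1..<k} \<union> {Suc k..<Suc n}"
    using set_shuffles[OF assms(1)] by (simp del: upt_Suc)
  moreover have "insert k ({1..<k} \<union> {Suc k..<Suc n}) = {1..n}" using assms(2,3) by fastforce
  ultimately show ?thesis unfolding perms_def by simp
qed

lemma card_shuffles_below_above:
  assumes "1 \<le> k" "k \<le> n"
  shows "card (shuffles (rev [1..<k]) [Suc k..<Suc n]) = (n - 1) choose (k - 1)"
proof -
  have "set (rev [1..<k]) \<inter> set [Suc k..<Suc n] = {}" by auto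
  then show ?thesis using assms by (simp add: card_disjoint_shuffles del: upt_Suc)
qed

lemma perms_equiv_Cons_shuffle:
  assumes "w \<in> perms n" "hd w = k" "1 \<le> k" "k \<le> n"
  shows "\<exists>r \<in> shuffles (rev [1..<k]) [Suc k..<Suc n]. w \<approx> k # r"
proof -
  obtain c where c: "w \<approx> c" "prefix_convex c"
    using exists_prefix_convex assms(1) unfolding perms_def by blast
  have "c \<in> perms n" "hd c = k"
    using perms_equiv_words[OF assms(1) c(1)] equiv_words_hd[OF c(1)] assms(2) by auto
  moreover from this have "c \<noteq> []" using assms(3,4) unfolding perms_def by auto
  ultimately obtain r where r: "c = [k] @ r" "distinct ([k] @ r)" "set ([k] @ r) = {1..n}"
    unfolding perms_def by (cases c) auto
  have "r \<in> shuffles (rev [1..<k]) [Suc k..<Suc n]"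
    by (rule prefix_convex_shuffles[of "[k]" r 1 n k k]) (use c(2) r in simp_all)
  with c(1) r(1) show ?thesis by (auto simp del: upt_Suc)
qed

lemma shuffles_inj_equiv_words:
  assumes "r \<in> shuffles (rev [1..<k]) [Suc k..<Suc n]" "r' \<in> shuffles (rev [1..<k]) [Suc k..<Suc n]"
    and "k # r \<approx> k # r'"
  shows "r = r'"
proof (rule shuffles_eq_if_first_outside_below_eq[OF assms(1,2), where p = "[k]"])
  show "first_outside_below ([k] @ r) = first_outside_below ([k] @ r')"
    using equiv_words_invariant[OF elem_move_first_outside_below assms(3)] by simp
qed (auto simp: sorted_wrt_rev simp del: upt_Suc)

lemma classes_with_head_eq:
  assumes "1 \<le> k" "k \<le> n"
  shows "{C \<in> perms n // cong_rel n. \<forall>w\<in>C. hd w = k} =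
    (\<lambda>r. cong_rel n `` {k # r}) ` shuffles (rev [1..<k]) [Suc k..<Suc n]"
proof (intro set_eqI iffI)
  fix C assume "C \<in> {C \<in> perms n // cong_rel n. \<forall>w\<in>C. hd w = k}"
  then obtain w where w: "w \<in> perms n" "C = cong_rel n `` {w}" and hd: "\<forall>v\<in>C. hd v = k"
    by (auto elim: quotientE)
  have "hd w = k" using hd w equiv_class_self[OF equiv_cong_rel] by auto
  then obtain r where r: "r \<in> shuffles (rev [1..<k]) [Suc k..<Suc n]" "w \<approx> k # r"
    using perms_equiv_Cons_shuffle w(1) assms by blast
  then have "(w, k # r) \<in> cong_rel n" using w(1) perms_equiv_words unfolding cong_rel_def by blast
  then have "C = cong_rel n `` {k # r}" using w(2) equiv_class_eq[OF equiv_cong_rel] by simp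
  with r(1) show "C \<in> (\<lambda>r. cong_rel n `` {k # r}) ` shuffles (rev [1..<k]) [Suc k..<Suc n]" by blast
next
  fix C assume "C \<in> (\<lambda>r. cong_rel n `` {k # r}) ` shuffles (rev [1..<k]) [Suc k..<Suc n]"
  then obtain r where r: "r \<in> shuffles (rev [1..<k]) [Suc k..<Suc n]" "C = cong_rel n `` {k # r}"
    by blast
  have "C \<in> perms n // cong_rel n" using Cons_shuffles_in_perms[OF r(1) assms] r(2) by (simp add: quotientI)
  moreover have "\<forall>v\<in>C. hd v = k" using r(2) equiv_words_hd unfolding cong_rel_def by fastforce
  ultimately show "C \<in> {C \<in> perms n // cong_rel n. \<forall>w\<in>C. hd w = k}" by simp
qed

lemma inj_on_class_of_Cons_shuffle:
  assumes "1 \<le> k" "k \<le> n"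
  shows "inj_on (\<lambda>r. cong_rel n `` {k # r}) (shuffles (rev [1..<k]) [Suc k..<Suc n])"
proof (rule inj_onI)
  fix r r' assume r: "r \<in> shuffles (rev [1..<k]) [Suc k..<Suc n]" "r' \<in> shuffles (rev [1..<k]) [Suc k..<Suc n]"
    and "cong_rel n `` {k # r} = cong_rel n `` {k # r'}"
  then have "(k # r, k # r') \<in> cong_rel n"
    using eq_equiv_class_iff[OF equiv_cong_rel] Cons_shuffles_in_perms assms by blast
  then show "r = r'" using shuffles_inj_equiv_words[OF r] unfolding cong_rel_def by blast
qed

theorem mainTheorem10:
  fixes n k :: nat
  assumes "1 \<le> n" and "1 \<le> k" and "k \<le> n"
  shows "card {C \<in> perms n // cong_rel n. \<forall>w\<in>C. hd w = k} = (n - 1) choose (k - 1)"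
proof -
  let ?S = "shuffles (rev [1..<k]) [Suc k..<Suc n]"
  have "card {C \<in> perms n // cong_rel n. \<forall>w\<in>C. hd w = k} =
      card ((\<lambda>r. cong_rel n `` {k # r}) ` ?S)"
    using classes_with_head_eq[OF assms(2,3)] by simp
  also have "\<dots> = card ?S" using inj_on_class_of_Cons_shuffle[OF assms(2,3)] by (rule card_image)
  also have "\<dots> = (n - 1) choose (k - 1)" using card_shuffles_below_above[OF assms(2,3)] .
  finally show ?thesis .
qed

end
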